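(* Let $p\geqslant1$ and $\varphi,\psi\in\mathfrak M_p$. Then $\varphi=\psi$ is a formal median identity if and only if $\varphi\sim\psi$.
   Context: A median algebra is a set with a ternary operation $m$ satisfying $m(a,a,b)=a$, invariance under permutations of the arguments, and $m(m(a,b,c),b,d)=m(a,b,m(c,b,d))$. Let $\Omega_p=\{\alpha_1,\ldots,\alpha_p\}$ and add two symbols $\langle,\rangle$. The set $\mathfrak M_p$ of formal ternary expressions is the smallest set of finite words over $\Omega_p\cup\{\langle,\rangle\}$ containing each $\alpha_i$ and containing $\langle\varphi_1\varphi_2\varphi_3\rangle$ whenever $\varphi_1,\varphi_2,\varphi_3$ belong to it; each element not in $\Omega_p$ is uniquely of the form $\langle\varphi_1\varphi_2\varphi_3\rangle$. For a set $Y$ with ternary operation $\nu$ and $y_1,\ldots,y_p\in Y$, the realisation $\varphi_Y(y_1,\ldots,y_p)$ is defined inductively by $(\alpha_i)_Y=y_i$ and $\langle\varphi_1\varphi_2\varphi_3\rangle_Y=\nu((\varphi_1)_Y,(\varphi_2)_Y,(\varphi_3)_Y)$. The equation $\varphi=\psi$ is a formal median identity if $\varphi_Y(y_1,\ldots,y_p)=\psi_Y(y_1,\ldots,y_p)$ for every median algebra $(Y,\nu)$ and all $y_i\in Y$. The complexity $\xi$ is defined by $\xi(\alpha_i)=0$ and $\xi(\langle\varphi_1\varphi_2\varphi_3\rangle)=\max_i\xi(\varphi_i)+1$. Elementary transformations are defined inductively on complexity: for $\varphi\in\Omega_p$ the only ones are $\varphi\mapsto\langle\varphi\varphi\psi\rangle$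 ($\psi\in\mathfrak M_p$). For $\varphi$ of complexity $n\geqslant1$: (I) $\varphi\mapsto\langle\varphi\varphi\psi\rangle$ for any $\psi\in\mathfrak M_p$, and if $\varphi=\langle\psi\psi\varphi'\rangle$ then $\varphi\mapsto\psi$; (II) if $\varphi=\langle\varphi_1\varphi_2\varphi_3\rangle$ then $\varphi\mapsto\langle\varphi_{\sigma(1)}\varphi_{\sigma(2)}\varphi_{\sigma(3)}\rangle$ for any permutation $\sigma$; (III) if $\varphi=\langle\langle\varphi_1\varphi_2\varphi_3\rangle\varphi_2\varphi_4\rangle$ then $\varphi\mapsto\langle\varphi_1\varphi_2\langle\varphi_3\varphi_2\varphi_4\rangle\rangle$, and if $\varphi=\langle\varphi_1\varphi_2\langle\varphi_3\varphi_2\varphi_4\rangle\rangle$ then $\varphi\mapsto\langle\langle\varphi_1\varphi_2\varphi_3\rangle\varphi_2\varphi_4\rangle$; (IV) if $\varphi=\langle\varphi_1\varphi_2\varphi_3\rangle$ and $\varphi_1'$ is obtained from $\varphi_1$ by an elementary transformation, then $\varphi\mapsto\langle\varphi_1'\varphi_2\varphi_3\rangle$. $\sim$ denotes the equivalence relation on $\mathfrak M_p$ generated by elementary transformations (transitive closure of the symmetric relation "obtained by one elementary transformation"). *)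

theory Defs
  imports "HOL-Combinatorics.Permutations"
begin

text \<open>The word \<open>\<langle>\<phi>1\<phi>2\<phi>3\<rangle>\<close> is represented by the tree
  \<open>Med \<phi>1 \<phi>2 \<phi>3\<close> (unique readability makes words and trees equivalent);
  the letter \<open>\<alpha>_i\<close> is \<open>Var i\<close>.\<close>
datatype mexpr = Var nat | Med mexpr mexpr mexpr

fun in_M :: "nat \<Rightarrow> mexpr \<Rightarrow> bool" where
  "in_M p (Var i) \<longleftrightarrow> 1 \<le> i \<and> i \<le> p"
| "in_M p (Med a b c) \<longleftrightarrow> in_M p a \<and> in_M p b \<and> in_M p c"

fun xi :: "mexpr \<Rightarrow> nat" where
  "xi (Var i) = 0"
| "xi (Med a b c) = max (xi a) (max (xi b) (xi c)) + 1"

definition median_algebra :: "'a set \<Rightarrow> ('a \<Rightarrow> 'a \<Rightarrow> 'a \<Rightarrow> 'a) \<Rightarrow> bool" where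
  "median_algebra Y m \<longleftrightarrow>
     (\<forall>a\<in>Y. \<forall>b\<in>Y. \<forall>c\<in>Y. m a b c \<in> Y) \<and>
     (\<forall>a\<in>Y. \<forall>b\<in>Y. m a a b = a) \<and>
     (\<forall>a\<in>Y. \<forall>b\<in>Y. \<forall>c\<in>Y. \<forall>\<sigma>. \<sigma> permutes {0::nat,1,2} \<longrightarrow>
        (let xs = [a,b,c] in m (xs ! \<sigma> 0) (xs ! \<sigma> 1) (xs ! \<sigma> 2)) = m a b c) \<and>
     (\<forall>a\<in>Y. \<forall>b\<in>Y. \<forall>c\<in>Y. \<forall>d\<in>Y. m (m a b c) b d = m a b (m c b d))"

fun realise :: "('a \<Rightarrow> 'a \<Rightarrow> 'a \<Rightarrow> 'a) \<Rightarrow> (nat \<Rightarrow> 'a) \<Rightarrow> mexpr \<Rightarrow> 'a" where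
  "realise m ys (Var i) = ys i"
| "realise m ys (Med a b c) = m (realise m ys a) (realise m ys b) (realise m ys c)"

text \<open>Formal median identity, relative to median algebras whose carrier lives in type \<open>'a\<close>.\<close>
definition formal_median_identity :: "'a itself \<Rightarrow> nat \<Rightarrow> mexpr \<Rightarrow> mexpr \<Rightarrow> bool" where
  "formal_median_identity _ p \<phi> \<psi> \<longleftrightarrow>
     (\<forall>(Y::'a set) m ys. median_algebra Y m \<and> (\<forall>i\<in>{1..p}. ys i \<in> Y) \<longrightarrow>
        realise m ys \<phi> = realise m ys \<psi>)"

inductive elem :: "nat \<Rightarrow> mexpr \<Rightarrow> mexpr \<Rightarrow> bool" for p where
  I_up: "in_M p \<psi> \<Longrightarrow> elem p \<phi> (Med \<phi> \<phi> \<psi>)"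
| I_down: "elem p (Med \<psi> \<psi> \<phi>') \<psi>"
| II: "\<sigma> permutes {0::nat,1,2} \<Longrightarrow>
     elem p (Med a b c) (let xs = [a,b,c] in Med (xs ! \<sigma> 0) (xs ! \<sigma> 1) (xs ! \<sigma> 2))"
| III_1: "elem p (Med (Med a1 a2 a3) a2 a4) (Med a1 a2 (Med a3 a2 a4))"
| III_2: "elem p (Med a1 a2 (Med a3 a2 a4)) (Med (Med a1 a2 a3) a2 a4)"
| IV: "elem p a a' \<Longrightarrow> elem p (Med a b c) (Med a' b c)"

definition msim :: "nat \<Rightarrow> mexpr \<Rightarrow> mexpr \<Rightarrow> bool" where
  "msim p = (\<lambda>x y. elem p x y \<or> elem p y x)\<^sup>*\<^sup>*"

end

theory Submission
  imports Defs "HOL-Library.Countable"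
begin

text \<open>Soundness: each elementary transformation is an instance of a median algebra axiom, so
  equivalent expressions have equal realisations. Completeness: the classes of \<open>\<sim>\<close> form a
  median algebra (the free one), and realising an expression there at the classes of the letters
  returns its own class; a formal identity therefore identifies the classes of both sides.
  Since \<open>mexpr\<close> is countable, this term model can be carried by a subset of \<open>nat\<close>.\<close>

lemma msim_eq_equivclp: "msim p = equivclp (elem p)"
  by (simp add: msim_def equivclp_def symclp_def [abs_def])

lemma equivp_msim: "equivp (msim p)"
  by (simp add: msim_eq_equivclp)

lemma msim_trans [trans]: "msim p x y \<Longrightarrow> msim p y z \<Longrightarrow> msim p x z"
  using equivp_transp[OF equivp_msim] .

lemma msim_if_elem: "elem p x y \<Longrightarrow> msim p x y"
  unfolding msim_def by (rule r_into_rtranclp) simp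

lemma nth_map_permutes3:
  assumes "\<sigma> permutes {0::nat,1,2}" and "i \<in> {0,1,2}"
  shows "f ([a,b,c] ! \<sigma> i) = [f a, f b, f c] ! \<sigma> i"
proof -
  have "\<sigma> i \<in> {0,1,2}"
    using permutes_in_image[OF assms(1)] assms(2) by simp
  then show ?thesis
    by (auto simp: nth_Cons')
qed

lemma elem_Med_swap12: "elem p (Med a b c) (Med b a c)"
proof -
  have "transpose (0::nat) 1 permutes {0,1,2}" by (rule permutes_swap_id) auto
  from II[OF this, of p a b c] show ?thesis by (simp add: transpose_def)
qed

lemma elem_Med_swap13: "elem p (Med a b c) (Med c b a)"
proof -
  have "transpose (0::nat) 2 permutes {0,1,2}" by (rule permutes_swap_id) auto
  from II[OF this, of p a b c] show ?thesis by (simp add: transpose_def)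
qed

lemma msim_Med_cong1: "msim p a a' \<Longrightarrow> msim p (Med a b c) (Med a' b c)"
  unfolding msim_eq_equivclp
proof (induction rule: equivclp_induct)
  case base
  show ?case by (simp add: equivp_reflp)
next
  case (step y z)
  then have "symclp (elem p) (Med y b c) (Med z b c)"
    by (auto intro: IV symclpI1 symclpI2)
  with step.IH show ?case
    unfolding equivclp_def by (rule rtranclp.rtrancl_into_rtrancl)
qed

lemma msim_Med_cong:
  assumes "msim p a a'" and "msim p b b'" and "msim p c c'"
  shows "msim p (Med a b c) (Med a' b' c')"
proof -
  have swap12: "msim p (Med x y z) (Med y x z)" for x y z
    by (rule msim_if_elem[OF elem_Med_swap12])
  have swap13: "msim p (Med x y z) (Med z y x)" for x y z
    by (rule msim_if_elem[OF elem_Med_swap13])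
  have "msim p (Med a b c) (Med a' b c)"
    using assms(1) by (rule msim_Med_cong1)
  also have "msim p \<dots> (Med b a' c)" by (rule swap12)
  also have "msim p \<dots> (Med b' a' c)" using assms(2) by (rule msim_Med_cong1)
  also have "msim p \<dots> (Med a' b' c)" by (rule swap12)
  also have "msim p \<dots> (Med c b' a')" by (rule swap13)
  also have "msim p \<dots> (Med c' b' a')" using assms(3) by (rule msim_Med_cong1)
  also have "msim p \<dots> (Med a' b' c')" by (rule swap13)
  finally show ?thesis .
qed

lemma median_algebra_closed:
  "median_algebra Y m \<Longrightarrow> a \<in> Y \<Longrightarrow> b \<in> Y \<Longrightarrow> c \<in> Y \<Longrightarrow> m a b c \<in> Y"
  unfolding median_algebra_def by blast

lemma median_algebra_majority:
  "median_algebra Y m \<Longrightarrow> a \<in> Y \<Longrightarrow> b \<in> Y \<Longrightarrow> m a a b = a"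
  unfolding median_algebra_def by blast

lemma median_algebra_permute:
  "median_algebra Y m \<Longrightarrow> a \<in> Y \<Longrightarrow> b \<in> Y \<Longrightarrow> c \<in> Y \<Longrightarrow> \<sigma> permutes {0::nat,1,2} \<Longrightarrow>
   m ([a,b,c] ! \<sigma> 0) ([a,b,c] ! \<sigma> 1) ([a,b,c] ! \<sigma> 2) = m a b c"
  unfolding median_algebra_def Let_def by blast

lemma median_algebra_assoc:
  "median_algebra Y m \<Longrightarrow> a \<in> Y \<Longrightarrow> b \<in> Y \<Longrightarrow> c \<in> Y \<Longrightarrow> d \<in> Y \<Longrightarrow>
   m (m a b c) b d = m a b (m c b d)"
  unfolding median_algebra_def by blast

lemma realise_in_carrier:
  "median_algebra Y m \<Longrightarrow> range ys \<subseteq> Y \<Longrightarrow> realise m ys x \<in> Y"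
  by (induction x) (auto intro: median_algebra_closed)

lemma realise_eq_if_elem:
  assumes "elem p x y" and "median_algebra Y m" and "range ys \<subseteq> Y"
  shows "realise m ys x = realise m ys y"
  using assms(1)
proof (induction rule: elem.induct)
  case (II \<sigma> a b c)
  let ?r = "realise m ys"
  have "?r ([a,b,c] ! \<sigma> i) = [?r a, ?r b, ?r c] ! \<sigma> i" if "i \<in> {0,1,2}" for i
    using nth_map_permutes3[OF II that] .
  then have "?r (let xs = [a,b,c] in Med (xs ! \<sigma> 0) (xs ! \<sigma> 1) (xs ! \<sigma> 2))
      = m ([?r a, ?r b, ?r c] ! \<sigma> 0) ([?r a, ?r b, ?r c] ! \<sigma> 1) ([?r a, ?r b, ?r c] ! \<sigma> 2)"
    by (simp add: Let_def)
  also have "\<dots> = m (?r a) (?r b) (?r c)"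
    by (rule median_algebra_permute[OF assms(2) _ _ _ II]) (rule realise_in_carrier[OF assms(2,3)])+
  finally show ?case by simp
qed (simp_all add: median_algebra_majority[OF assms(2)] median_algebra_assoc[OF assms(2)]
                   realise_in_carrier[OF assms(2,3)])

lemma realise_eq_if_msim:
  assumes "msim p x y" and "median_algebra Y m" and "range ys \<subseteq> Y"
  shows "realise m ys x = realise m ys y"
  using assms(1) unfolding msim_eq_equivclp
  by (induction rule: equivclp_induct) (auto dest: realise_eq_if_elem[OF _ assms(2,3)])

lemma realise_cong_in_M:
  "in_M p x \<Longrightarrow> (\<And>i. i \<in> {1..p} \<Longrightarrow> ys i = ys' i) \<Longrightarrow> realise m ys x = realise m ys' x"
  by (induction x) auto

lemma formal_median_identityD:
  "formal_median_identity TYPE('a) p \<phi> \<psi> \<Longrightarrow> median_algebra (Y :: 'a set) m \<Longrightarrow>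
   (\<And>i. i \<in> {1..p} \<Longrightarrow> ys i \<in> Y) \<Longrightarrow> realise m ys \<phi> = realise m ys \<psi>"
  unfolding formal_median_identity_def by blast

lemma formal_median_identity_if_msim:
  assumes "p \<ge> 1" and "in_M p \<phi>" and "in_M p \<psi>" and "msim p \<phi> \<psi>"
  shows "formal_median_identity TYPE('a) p \<phi> \<psi>"
  unfolding formal_median_identity_def
proof (intro allI impI, elim conjE)
  fix Y :: "'a set" and m ys
  assume median: "median_algebra Y m" and ys: "\<forall>i\<in>{1..p}. ys i \<in> Y"
  \<comment> \<open>The letters outside \<open>\<alpha>\<^sub>1,\<dots>,\<alpha>\<^sub>p\<close> may occur in the intermediate expressions of
    a chain of transformations; they are sent to \<open>ys 1 \<in> Y\<close>.\<close>
  define ys' where "ys' i = (if i \<in> {1..p} then ys i else ys 1)" for i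
  have "range ys' \<subseteq> Y"
    using ys assms(1) by (auto simp: ys'_def)
  then have "realise m ys' \<phi> = realise m ys' \<psi>"
    by (rule realise_eq_if_msim[OF assms(4) median])
  moreover have "realise m ys' \<chi> = realise m ys \<chi>" if "in_M p \<chi>" for \<chi>
    using that by (rule realise_cong_in_M) (simp add: ys'_def)
  ultimately show "realise m ys \<phi> = realise m ys \<psi>"
    using assms(2,3) by simp
qed

instance mexpr :: countable by countable_datatype

definition msim_rep :: "nat \<Rightarrow> mexpr \<Rightarrow> mexpr" where
  "msim_rep p x = (SOME y. msim p x y)"

lemma msim_msim_rep: "msim p x (msim_rep p x)"
  unfolding msim_rep_def by (rule someI[of _ x]) (rule equivp_reflp[OF equivp_msim])

lemma msim_rep_eq_iff: "msim_rep p x = msim_rep p y \<longleftrightarrow> msim p x y"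
proof
  assume "msim_rep p x = msim_rep p y"
  then show "msim p x y"
    using msim_msim_rep[of p x] msim_msim_rep[of p y] equivp_msim
    by (metis equivp_symp equivp_transp)
next
  assume "msim p x y"
  then have "msim p x = msim p y"
    using equivp_msim by (simp add: equivp_def)
  then show "msim_rep p x = msim_rep p y"
    by (simp add: msim_rep_def)
qed

definition msim_code :: "nat \<Rightarrow> mexpr \<Rightarrow> nat" where
  "msim_code p x = to_nat (msim_rep p x)"

lemma msim_code_eq_iff: "msim_code p x = msim_code p y \<longleftrightarrow> msim p x y"
  by (simp add: msim_code_def msim_rep_eq_iff)

definition msim_median :: "nat \<Rightarrow> nat \<Rightarrow> nat \<Rightarrow> nat \<Rightarrow> nat" where
  "msim_median p u v w = msim_code p (Med (from_nat u) (from_nat v) (from_nat w))"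

lemma msim_median_msim_code:
  "msim_median p (msim_code p a) (msim_code p b) (msim_code p c) = msim_code p (Med a b c)"
proof -
  have "msim p (from_nat (msim_code p x)) x" for x
    using equivp_symp[OF equivp_msim msim_msim_rep] by (simp add: msim_code_def)
  then show ?thesis
    by (simp add: msim_median_def msim_code_eq_iff msim_Med_cong)
qed

lemma median_algebra_msim_median: "median_algebra (range (msim_code p)) (msim_median p)"
  unfolding median_algebra_def
proof (intro conjI ballI allI impI)
  fix u v w assume "u \<in> range (msim_code p)" "v \<in> range (msim_code p)" "w \<in> range (msim_code p)"
  then show "msim_median p u v w \<in> range (msim_code p)"
    by (auto simp: msim_median_def)
next
  fix u v assume "u \<in> range (msim_code p)" "v \<in> range (msim_code p)"
  then show "msim_median p u u v = u"
    by (auto simp: msim_median_msim_code msim_code_eq_iff msim_if_elem[OF I_down])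
next
  fix u v w and \<sigma> :: "nat \<Rightarrow> nat"
  assume "u \<in> range (msim_code p)" "v \<in> range (msim_code p)" "w \<in> range (msim_code p)"
    and \<sigma>: "\<sigma> permutes {0,1,2}"
  then obtain x y z where xyz: "u = msim_code p x" "v = msim_code p y" "w = msim_code p z"
    by auto
  let ?c = "msim_code p"
  have "[?c x, ?c y, ?c z] ! \<sigma> i = ?c ([x,y,z] ! \<sigma> i)" if "i \<in> {0,1,2}" for i
    by (rule nth_map_permutes3[OF \<sigma> that, symmetric])
  then have "(let xs = [u,v,w] in msim_median p (xs ! \<sigma> 0) (xs ! \<sigma> 1) (xs ! \<sigma> 2))
      = ?c (let xs = [x,y,z] in Med (xs ! \<sigma> 0) (xs ! \<sigma> 1) (xs ! \<sigma> 2))"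
    by (simp add: xyz Let_def msim_median_msim_code)
  also have "\<dots> = ?c (Med x y z)"
    using II[OF \<sigma>] by (simp add: msim_code_eq_iff equivp_symp[OF equivp_msim] msim_if_elem)
  finally show "(let xs = [u,v,w] in msim_median p (xs ! \<sigma> 0) (xs ! \<sigma> 1) (xs ! \<sigma> 2))
      = msim_median p u v w"
    by (simp add: xyz msim_median_msim_code)
next
  fix u v w t
  assume "u \<in> range (msim_code p)" "v \<in> range (msim_code p)" "w \<in> range (msim_code p)"
    "t \<in> range (msim_code p)"
  then obtain x y z r where "u = msim_code p x" "v = msim_code p y" "w = msim_code p z"
      "t = msim_code p r"
    by blast
  then show "msim_median p (msim_median p u v w) v t = msim_median p u v (msim_median p w v t)"
    by (simp add: msim_median_msim_code msim_code_eq_iff msim_if_elem[OF III_1])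
qed

lemma realise_msim_median: "realise (msim_median p) (\<lambda>i. msim_code p (Var i)) x = msim_code p x"
  by (induction x) (simp_all add: msim_median_msim_code)

lemma msim_if_formal_median_identity:
  assumes "formal_median_identity TYPE(nat) p \<phi> \<psi>"
  shows "msim p \<phi> \<psi>"
proof -
  have "realise (msim_median p) (\<lambda>i. msim_code p (Var i)) \<phi>
      = realise (msim_median p) (\<lambda>i. msim_code p (Var i)) \<psi>"
    using assms median_algebra_msim_median by (rule formal_median_identityD) simp
  then show ?thesis
    by (simp add: realise_msim_median msim_code_eq_iff)
qed

theorem corollary3p10:
  fixes p :: nat and \<phi> \<psi> :: mexpr
  assumes "p \<ge> 1" and "in_M p \<phi>" and "in_M p \<psi>"
  shows "(formal_median_identity TYPE(nat) p \<phi> \<psi> \<longleftrightarrow> msim p \<phi> \<psi>)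
       \<and> (msim p \<phi> \<psi> \<longrightarrow> formal_median_identity TYPE('a) p \<phi> \<psi>)"
proof (intro conjI iffI impI)
  show "msim p \<phi> \<psi>" if "formal_median_identity TYPE(nat) p \<phi> \<psi>"
    using that by (rule msim_if_formal_median_identity)
  show "formal_median_identity TYPE(nat) p \<phi> \<psi>" if "msim p \<phi> \<psi>"
    using assms that by (rule formal_median_identity_if_msim)
  show "formal_median_identity TYPE('a) p \<phi> \<psi>" if "msim p \<phi> \<psi>"
    using assms that by (rule formal_median_identity_if_msim)
qed

end
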